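(* Let $(X,Y)\in[0,2\pi]\times\mathbb{R}$ be random variables with $\mathbb{E}[Y^2]<\infty$, $X$ uniformly distributed on $[0,2\pi]$, and let $s_*(X)=\mathbb{E}[Y\mid X]$. Fix $\nu>1/2$, $L_1,L_2>0$ and assume $s_*\in\Lambda_\nu(L_1,L_2)$. Let $m=\mathrm{Span}\{\varphi_1,\dots,\varphi_D\}$ (the first $D$ Fourier functions), let $s_m$ be the orthogonal projection of $s_*$ onto $m$ in $L_2(P^X)$, set $\zeta=Y-s_m(X)$, and assume $\zeta$ is independent of $X$ and $\mathbb{E}\zeta^2\leq\sigma^2$ for some $\sigma>0$. Given an i.i.d. sample $(X_i,Y_i)_{i=1}^n$ distributed as $(X,Y)$, let $\hat s_m\in\arg\min_{s\in m}\frac1n\sum_{i=1}^n(Y_i-s(X_i))^2$. Then there exist constants $L_\nu$ (depending only on $\nu$), $L_{L_1,L_2,\sigma,\nu}$ (depending only on $L_1,L_2,\sigma,\nu$), $C_{\nu,L_1,L_2}>0$ and $\beta_0>0$ (depending only on $\nu,L_1,L_2$), and an integer $n_0(\nu,L_1,L_2)$ such that, if \[ 0<\big(2\sqrt2L_1L_2^{-1}\big)^{1/\nu}\leq D\leq L_\nu\Big(\frac{n}{\ln n}\Big)^{\frac1{2(\nu+1)}} \] and $x\in\big(0,\,L_{L_1,L_2,\sigma,\nu}\,n/D^{2(\nu+1)}\big)$, then for every $n\geq n_0(\nu,L_1,L_2)$, on an event of probability at least $1-\exp(-\beta_0^2n/4)-n^{-2}-2/x$, \[ \|\hat s_m-s_m\|_2^2\leq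 C_{\nu,L_1,L_2}\frac{\sigma^2Dx}{n}. \]
   Context: Fourier functions: $\varphi_1\equiv1$, $\varphi_{2k}(x)=\sqrt2\cos(kx)$, $\varphi_{2k+1}(x)=\sqrt2\sin(kx)$ for $k\geq1$; $\langle f,g\rangle=\int fg\,dP^X$ with $P^X$ uniform on $[0,2\pi]$, $\|\cdot\|_2$ the associated norm, $\beta_k(f)=\langle f,\varphi_k\rangle$ for $2\pi$-periodic $f$. For $\nu,L_1,L_2>0$, $\Lambda_\nu(L_1,L_2)=\{f\in L_\infty(\mathbb{T}):\sum_{k\geq1}k^\nu|\beta_k(f)|\leq L_1\text{ and }\|f\|_\infty\geq L_2\}$, where $L_\infty(\mathbb{T})$ denotes bounded $2\pi$-periodic functions. *)

theory Defs
  imports "HOL-Probability.Probability"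
begin

text \<open>Fourier functions: phi 1 = 1, phi (2k) = sqrt 2 cos(k x), phi (2k+1) = sqrt 2 sin(k x), k >= 1.
  (The value at index 0 is irrelevant and never used.)\<close>
definition phi :: "nat \<Rightarrow> real \<Rightarrow> real" where
  "phi j x = (if j = 1 then 1
              else if even j then sqrt 2 * cos (real (j div 2) * x)
              else sqrt 2 * sin (real (j div 2) * x))"

definition PX :: "real measure" where
  "PX = uniform_measure lborel {0..2*pi}"

definition inner_PX :: "(real \<Rightarrow> real) \<Rightarrow> (real \<Rightarrow> real) \<Rightarrow> real" where
  "inner_PX f g = (\<integral>x. f x * g x \<partial>PX)"

definition norm2_sq :: "(real \<Rightarrow> real) \<Rightarrow> real" where
  "norm2_sq f = (\<integral>x. (f x)^2 \<partial>PX)"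

definition beta :: "nat \<Rightarrow> (real \<Rightarrow> real) \<Rightarrow> real" where
  "beta k f = inner_PX f (phi k)"

definition Linf_T :: "(real \<Rightarrow> real) set" where
  "Linf_T = {f. f \<in> borel_measurable borel \<and> (\<forall>x. f (x + 2*pi) = f x) \<and> bounded (range f)}"

definition norm_inf :: "(real \<Rightarrow> real) \<Rightarrow> ereal" where
  "norm_inf f = esssup lborel (\<lambda>x. ereal \<bar>f x\<bar>)"

definition Lambda :: "real \<Rightarrow> real \<Rightarrow> real \<Rightarrow> (real \<Rightarrow> real) set" where
  "Lambda \<nu> L1 L2 = {f \<in> Linf_T.
      summable (\<lambda>k. real (Suc k) powr \<nu> * \<bar>beta (Suc k) f\<bar>) \<and>
      (\<Sum>k. real (Suc k) powr \<nu> * \<bar>beta (Suc k) f\<bar>) \<le> L1 \<and>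
      norm_inf f \<ge> ereal L2}"

definition model :: "nat \<Rightarrow> (real \<Rightarrow> real) set" where
  "model D = {s. \<exists>a::nat \<Rightarrow> real. s = (\<lambda>x. \<Sum>k=1..D. a k * phi k x)}"

definition emp_risk :: "nat \<Rightarrow> (nat \<Rightarrow> real \<times> real) \<Rightarrow> (real \<Rightarrow> real) \<Rightarrow> real" where
  "emp_risk n \<omega> s = (1 / real n) * (\<Sum>i=1..n. (snd (\<omega> i) - s (fst (\<omega> i)))^2)"

end

theory Submission
  imports Defs
begin

text \<open>Write \<open>\<hat>s\<^sub>m - s\<^sub>m = \<Sum>\<^sub>k c\<^sub>k \<phi>\<^sub>k\<close>. Orthonormality of the Fourier functions gives
  \<open>\<parallel>\<hat>s\<^sub>m - s\<^sub>m\<parallel>\<^sup>2 = |c|\<^sup>2\<close>, and comparing the empirical risk of \<open>\<hat>s\<^sub>m\<close> with that of \<open>s\<^sub>m\<close>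
  gives the normal inequality \<open>c\<^sup>T \<hat>G c \<le> 2 c\<^sup>T w\<close>, where \<open>\<hat>G\<close> is the empirical Gram matrix of
  \<open>\<phi>\<^sub>1, \<dots>, \<phi>\<^sub>D\<close> and \<open>w\<^sub>k = n\<^sup>-\<^sup>1 \<Sum>\<^sub>i \<zeta>\<^sub>i \<phi>\<^sub>k(X\<^sub>i)\<close>. Both are empirical means of centred variables:
  \<open>E \<hat>G = I\<close> by orthonormality, and \<open>E w = 0\<close> because \<open>s\<^sub>m\<close> is the projection of the regression
  function. Chebyshev's inequality makes \<open>\<parallel>\<hat>G - I\<parallel>\<^sub>F \<le> 1/2\<close> fail with probability at most
  \<open>36 D\<^sup>2/n \<le> 1/x\<close> and \<open>|w|\<^sup>2 \<le> 2D\<sigma>\<^sup>2x/n\<close> fail with probability at most \<open>1/x\<close>; on the remaining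
  event \<open>|c|\<^sup>2 \<le> 16 |w|\<^sup>2\<close>.\<close>

lemma has_integral_cos_affine:
  "((\<lambda>x. cos (of_int m * x + c)) has_integral (if m = 0 then 2 * pi * cos c else 0)) {0..2*pi}"
proof (cases "m = 0")
  case True
  then show ?thesis using has_integral_const_real[of "cos c" 0 "2*pi"] by simp
next
  case False
  have "((\<lambda>x. cos (of_int m * x + c)) has_integral
          sin (of_int m * (2*pi) + c) / m - sin (of_int m * 0 + c) / m) {0..2*pi}"
  proof (rule fundamental_theorem_of_calculus)
    show "((\<lambda>x. sin (of_int m * x + c) / m) has_vector_derivative cos (of_int m * x + c))
            (at x within {0..2*pi})" for x
      using False unfolding has_vector_derivative_def
      by (intro derivative_eq_intros | force)+
  qed simp
  moreover have "sin (of_int m * (2*pi) + c) = sin c"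
    using sin_int_2pin[of m] cos_int_2pin[of m] by (simp add: sin_add mult_ac)
  ultimately show ?thesis using False by simp
qed

lemma phi_eq_cos:
  "j \<noteq> 1 \<Longrightarrow> phi j x = sqrt 2 * cos (real (j div 2) * x - (if even j then 0 else pi/2))"
  by (simp add: phi_def cos_diff)

lemma has_integral_phi_mult_phi:
  assumes "1 \<le> j" "1 \<le> k"
  shows "((\<lambda>x. phi j x * phi k x) has_integral (if j = k then 2 * pi else 0)) {0..2*pi}"
proof -
  define p q where "p = int (j div 2)" and "q = int (k div 2)"
  define a b where "a = (if even j then 0 else pi/2)" and "b = (if even k then 0 else pi/2)"
  have phi_j: "phi j = (\<lambda>x. sqrt 2 * cos (of_int p * x + - a))" if "j \<noteq> 1"
    using that by (simp add: fun_eq_iff phi_eq_cos p_def a_def)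
  have phi_k: "phi k = (\<lambda>x. sqrt 2 * cos (of_int q * x + - b))" if "k \<noteq> 1"
    using that by (simp add: fun_eq_iff phi_eq_cos q_def b_def)
  have p_pos: "p \<ge> 1" if "j \<noteq> 1" using that assms unfolding p_def by linarith
  have q_pos: "q \<ge> 1" if "k \<noteq> 1" using that assms unfolding q_def by linarith
  have phi_1: "phi (Suc 0) = (\<lambda>x. 1)" by (simp add: fun_eq_iff phi_def)
  consider "j = 1" "k = 1" | "j = 1" "k \<noteq> 1" | "j \<noteq> 1" "k = 1" | "j \<noteq> 1" "k \<noteq> 1"
    by blast
  then show ?thesis
  proof cases
    case 1
    then show ?thesis
      using has_integral_const_real[of "1::real" 0 "2*pi"] by (simp add: phi_1 del: has_integral_const_real)
  next
    case 2
    then show ?thesis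
      using has_integral_mult_right[OF has_integral_cos_affine[of q "- b"], of "sqrt 2"] q_pos
      by (simp add: phi_1 phi_k)
  next
    case 3
    then show ?thesis
      using has_integral_mult_right[OF has_integral_cos_affine[of p "- a"], of "sqrt 2"] p_pos
      by (simp add: phi_1 phi_j)
  next
    case 4
    have "phi j x * phi k x = cos (of_int (p - q) * x + (b - a)) + cos (of_int (p + q) * x + - (a + b))"
      for x
      using 4 by (simp add: phi_j phi_k cos_times_cos algebra_simps mult.assoc[symmetric])
    moreover have "((\<lambda>x. cos (of_int (p - q) * x + (b - a)) + cos (of_int (p + q) * x + - (a + b)))
        has_integral (if p = q then 2 * pi * cos (b - a) else 0)) {0..2*pi}"
      using has_integral_add[OF has_integral_cos_affine[of "p - q" "b - a"]
          has_integral_cos_affine[of "p + q" "- (a + b)"]] p_pos q_pos 4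
      by simp
    moreover have "(if p = q then 2 * pi * cos (b - a) else 0) = (if j = k then 2 * pi else 0)"
    proof (cases "p = q")
      case True
      then have "j = k \<longleftrightarrow> (even j \<longleftrightarrow> even k)"
        unfolding p_def q_def by (metis dvd_mult_div_cancel odd_two_times_div_two_succ of_nat_eq_iff)
      then have "j = k \<longleftrightarrow> a = b"
        unfolding a_def b_def by auto
      moreover have "a \<noteq> b \<Longrightarrow> cos (b - a) = 0"
        unfolding a_def b_def by (auto split: if_splits)
      ultimately show ?thesis using True by auto
    next
      case False
      then show ?thesis unfolding p_def q_def by auto
    qed
    ultimately show ?thesis by simp
  qed
qed

lemma phi_continuous [continuous_intros]: "continuous_on S (phi j)"
  unfolding phi_def by (cases "j = 1"; cases "even j") (auto intro!: continuous_intros)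

lemma phi_measurable [measurable]: "phi j \<in> borel_measurable borel"
  by (rule borel_measurable_continuous_onI) (rule phi_continuous)

lemma abs_phi_le: "\<bar>phi j x\<bar> \<le> sqrt 2"
proof -
  have "1 \<le> sqrt (2::real)" by simp
  then show ?thesis unfolding phi_def by (auto simp: abs_mult intro!: mult_left_le)
qed

lemma abs_phi_mult_phi_le: "\<bar>phi j x * phi k x\<bar> \<le> 2"
proof -
  have "\<bar>phi j x\<bar> * \<bar>phi k x\<bar> \<le> sqrt 2 * sqrt 2"
    by (intro mult_mono abs_phi_le) auto
  then show ?thesis by (simp add: abs_mult)
qed

lemma prob_space_PX: "prob_space PX"
  unfolding PX_def by (rule prob_space_uniform_measure) auto

lemma integral_PX_eq_has_integral:
  fixes f :: "real \<Rightarrow> real"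
  assumes f: "continuous_on UNIV f" and I: "(f has_integral I) {0..2*pi}"
  shows "integral\<^sup>L PX f = I / (2*pi)"
proof -
  have PX_density: "PX = density lborel (\<lambda>x. ennreal (indicator {0..2*pi} x / (2*pi)))"
  proof -
    have "1 / ennreal (2*pi) = ennreal (1 / (2*pi))" using divide_ennreal[of 1 "2*pi"] by simp
    then show ?thesis unfolding PX_def uniform_measure_def
      by (intro density_cong) (simp_all add: indicator_def)
  qed
  have "integral\<^sup>L PX f = (\<integral>x. (indicator {0..2*pi} x / (2*pi)) *\<^sub>R f x \<partial>lborel)"
    unfolding PX_density using f by (intro integral_density) (auto intro: borel_measurable_continuous_onI)
  also have "\<dots> = (\<integral>x. (indicator {0..2*pi} x *\<^sub>R f x) / (2*pi) \<partial>lborel)"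
    by (rule Bochner_Integration.integral_cong) auto
  also have "\<dots> = (\<integral>x. indicator {0..2*pi} x *\<^sub>R f x \<partial>lborel) / (2*pi)"
    by (rule integral_divide_zero)
  also have "(\<integral>x. indicator {0..2*pi} x *\<^sub>R f x \<partial>lborel) = integral {0..2*pi} f"
    using set_borel_integral_eq_integral(2)[OF borel_integrable_atLeastAtMost'[of 0 "2*pi" f]]
      continuous_on_subset[OF f] unfolding set_lebesgue_integral_def by blast
  also have "integral {0..2*pi} f = I" using I by (rule integral_unique)
  finally show ?thesis .
qed

lemma integrable_PX_phi_mult_phi: "integrable PX (\<lambda>x. phi j x * phi k x)"
proof -
  interpret prob_space PX by (rule prob_space_PX)
  show ?thesis
    by (rule integrable_const_bound[where B=2]) (auto simp: PX_def abs_phi_mult_phi_le)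
qed

lemma integral_PX_phi_mult_phi:
  "1 \<le> j \<Longrightarrow> 1 \<le> k \<Longrightarrow> integral\<^sup>L PX (\<lambda>x. phi j x * phi k x) = (if j = k then 1 else 0)"
  using integral_PX_eq_has_integral[OF _ has_integral_phi_mult_phi]
  by (simp add: continuous_intros)

lemma norm2_sq_model:
  "norm2_sq (\<lambda>t. \<Sum>k=1..D. c k * phi k t) = (\<Sum>k=1..D. (c k)^2)"
proof -
  have "norm2_sq (\<lambda>t. \<Sum>k=1..D. c k * phi k t)
      = integral\<^sup>L PX (\<lambda>t. \<Sum>j=1..D. \<Sum>k=1..D. c j * c k * (phi j t * phi k t))"
    unfolding norm2_sq_def power2_eq_square sum_product by (simp add: mult_ac)
  also have "\<dots> = (\<Sum>j=1..D. \<Sum>k=1..D. c j * c k * integral\<^sup>L PX (\<lambda>t. phi j t * phi k t))"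
    by (simp add: Bochner_Integration.integral_sum Bochner_Integration.integrable_sum
        integrable_PX_phi_mult_phi)
  also have "\<dots> = (\<Sum>j=1..D. \<Sum>k=1..D. if j = k then c j * c j else 0)"
    by (intro sum.cong refl) (simp add: integral_PX_phi_mult_phi)
  finally show ?thesis by (simp add: power2_eq_square)
qed

lemma phi_in_model:
  assumes "k \<in> {1..D}"
  shows "phi k \<in> model D"
proof -
  have "phi k x = (\<Sum>l=1..D. (if l = k then 1 else 0) * phi l x)" for x
    using assms by (simp add: if_distrib[of "\<lambda>a. a * _"] sum.delta cong: if_cong)
  then show ?thesis
    unfolding model_def by (intro CollectI exI[of _ "\<lambda>l. if l = k then 1 else 0"]) auto
qed

lemma model_continuous: "s \<in> model D \<Longrightarrow> continuous_on UNIV s"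
  unfolding model_def by (auto intro!: continuous_intros)

lemma model_bounded:
  assumes "s \<in> model D"
  obtains B where "\<And>t. \<bar>s t\<bar> \<le> B"
proof -
  obtain a where a: "s = (\<lambda>x. \<Sum>k=1..D. a k * phi k x)" using assms unfolding model_def by blast
  have "\<bar>s t\<bar> \<le> (\<Sum>k=1..D. \<bar>a k\<bar> * sqrt 2)" for t
    unfolding a
    by (rule order_trans[OF sum_abs]) (auto simp: abs_mult intro!: sum_mono mult_left_mono abs_phi_le)
  then show thesis by (rule that)
qed

lemma integral_PiM_coordinate_products:
  fixes h :: "'a \<Rightarrow> real"
  assumes \<mu>: "prob_space \<mu>" and I: "finite I" "i \<in> I" "l \<in> I"
    and h: "h \<in> borel_measurable \<mu>" "integrable \<mu> (\<lambda>p. (h p)^2)"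
  shows "integrable (PiM I (\<lambda>_. \<mu>)) (\<lambda>\<omega>. h (\<omega> i) * h (\<omega> l))"
    and "(\<integral>\<omega>. h (\<omega> i) * h (\<omega> l) \<partial>PiM I (\<lambda>_. \<mu>))
           = (if i = l then integral\<^sup>L \<mu> (\<lambda>p. (h p)^2) else (integral\<^sup>L \<mu> h)^2)"
proof -
  interpret prob_space \<mu> by (rule \<mu>)
  interpret product_sigma_finite "\<lambda>_. \<mu>" by standard
  have h_int: "integrable \<mu> h" using square_integrable_imp_integrable[OF h] .
  define F where "F t p = (if t = i then h p else 1) * (if t = l then h p else (1::real))" for t p
  have F_int: "integrable \<mu> (F t)" for t
    using h(2) h_int unfolding F_def by (cases "t = i"; cases "t = l") (auto simp: power2_eq_square)
  have prod_F: "(\<Prod>t\<in>I. F t (\<omega> t)) = h (\<omega> i) * h (\<omega> l)" for \<omega>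
    using I unfolding F_def prod.distrib by (simp add: prod.delta)
  have "integrable (PiM I (\<lambda>_. \<mu>)) (\<lambda>\<omega>. \<Prod>t\<in>I. F t (\<omega> t))"
    by (rule product_integrable_prod) (use I F_int in auto)
  then show "integrable (PiM I (\<lambda>_. \<mu>)) (\<lambda>\<omega>. h (\<omega> i) * h (\<omega> l))"
    by (simp add: prod_F)
  have "(\<integral>\<omega>. (\<Prod>t\<in>I. F t (\<omega> t)) \<partial>PiM I (\<lambda>_. \<mu>)) = (\<Prod>t\<in>I. integral\<^sup>L \<mu> (F t))"
    by (rule product_integral_prod) (use I F_int in auto)
  then have int_eq: "(\<integral>\<omega>. h (\<omega> i) * h (\<omega> l) \<partial>PiM I (\<lambda>_. \<mu>)) = (\<Prod>t\<in>I. integral\<^sup>L \<mu> (F t))"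
    by (simp add: prod_F)
  show "(\<integral>\<omega>. h (\<omega> i) * h (\<omega> l) \<partial>PiM I (\<lambda>_. \<mu>))
      = (if i = l then integral\<^sup>L \<mu> (\<lambda>p. (h p)^2) else (integral\<^sup>L \<mu> h)^2)"
  proof (cases "i = l")
    case True
    then have "(\<Prod>t\<in>I. integral\<^sup>L \<mu> (F t)) = (\<Prod>t\<in>I. if t = i then integral\<^sup>L \<mu> (\<lambda>p. (h p)^2) else 1)"
      unfolding F_def by (intro prod.cong) (auto simp: prob_space power2_eq_square)
    then show ?thesis using int_eq True I by (simp add: prod.delta)
  next
    case False
    then have "(\<Prod>t\<in>I. integral\<^sup>L \<mu> (F t))
        = (\<Prod>t\<in>I. (if t = i then integral\<^sup>L \<mu> h else 1) * (if t = l then integral\<^sup>L \<mu> h else 1))"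
      unfolding F_def by (intro prod.cong) (auto simp: prob_space)
    then show ?thesis using int_eq False I by (simp add: prod.distrib prod.delta power2_eq_square)
  qed
qed

lemma integral_PiM_square_sample_mean:
  fixes h :: "'a \<Rightarrow> real"
  assumes \<mu>: "prob_space \<mu>" and I: "finite I" "I \<noteq> {}"
    and h: "h \<in> borel_measurable \<mu>" "integrable \<mu> (\<lambda>p. (h p)^2)" and centered: "integral\<^sup>L \<mu> h = 0"
  shows "integrable (PiM I (\<lambda>_. \<mu>)) (\<lambda>\<omega>. ((\<Sum>i\<in>I. h (\<omega> i)) / card I)^2)"
    and "(\<integral>\<omega>. ((\<Sum>i\<in>I. h (\<omega> i)) / card I)^2 \<partial>PiM I (\<lambda>_. \<mu>)) = integral\<^sup>L \<mu> (\<lambda>p. (h p)^2) / card I"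
proof -
  note coord = integral_PiM_coordinate_products[OF \<mu> I(1) _ _ h, unfolded centered power_zero_numeral]
  have sq: "((\<Sum>i\<in>I. h (\<omega> i)) / card I)^2 = (\<Sum>i\<in>I. \<Sum>l\<in>I. h (\<omega> i) * h (\<omega> l)) / (card I)^2" for \<omega>
    by (simp add: power2_eq_square sum_product)
  show "integrable (PiM I (\<lambda>_. \<mu>)) (\<lambda>\<omega>. ((\<Sum>i\<in>I. h (\<omega> i)) / card I)^2)"
    unfolding sq by (intro integrable_divide_zero Bochner_Integration.integrable_sum coord(1))
  have "(\<integral>\<omega>. (\<Sum>i\<in>I. \<Sum>l\<in>I. h (\<omega> i) * h (\<omega> l)) \<partial>PiM I (\<lambda>_. \<mu>))
      = (\<Sum>i\<in>I. \<Sum>l\<in>I. if i = l then integral\<^sup>L \<mu> (\<lambda>p. (h p)^2) else 0)"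
    by (simp add: Bochner_Integration.integral_sum Bochner_Integration.integrable_sum coord
        cong: sum.cong)
  then show "(\<integral>\<omega>. ((\<Sum>i\<in>I. h (\<omega> i)) / card I)^2 \<partial>PiM I (\<lambda>_. \<mu>)) = integral\<^sup>L \<mu> (\<lambda>p. (h p)^2) / card I"
    unfolding sq using I by (simp add: power2_eq_square)
qed

lemma Cauchy_Schwarz_bilinear_form:
  fixes c :: "'a \<Rightarrow> real" and M :: "'a \<Rightarrow> 'a \<Rightarrow> real"
  shows "(\<Sum>j\<in>K. \<Sum>k\<in>K. c j * c k * M j k)^2 \<le> (\<Sum>k\<in>K. (c k)^2)^2 * (\<Sum>j\<in>K. \<Sum>k\<in>K. (M j k)^2)"
proof -
  have "(\<Sum>(j,k)\<in>K\<times>K. (c j * c k) * M j k)^2 \<le> (\<Sum>(j,k)\<in>K\<times>K. (c j * c k)^2) * (\<Sum>(j,k)\<in>K\<times>K. (M j k)^2)"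
    using Cauchy_Schwarz_ineq_sum[of "\<lambda>p. c (fst p) * c (snd p)" "\<lambda>p. M (fst p) (snd p)" "K\<times>K"]
    by (simp add: case_prod_beta)
  moreover have "(\<Sum>k\<in>K. (c k)^2)^2 = (\<Sum>(j,k)\<in>K\<times>K. (c j * c k)^2)"
    by (simp add: power2_eq_square sum_product sum.cartesian_product mult_ac)
  ultimately show ?thesis by (simp add: sum.cartesian_product)
qed

lemma sum_square_linear_combination:
  fixes c :: "'a \<Rightarrow> real" and F :: "'a \<Rightarrow> 'b \<Rightarrow> real"
  shows "(\<Sum>i\<in>I. (\<Sum>k\<in>K. c k * F k i)^2) = (\<Sum>j\<in>K. \<Sum>k\<in>K. c j * c k * (\<Sum>i\<in>I. F j i * F k i))"
  by (simp add: power2_eq_square sum_product sum_distrib_left mult_ac sum.swap[of _ I])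

text \<open>If the empirical Gram matrix of the design is within Frobenius distance 1/2 of the identity,
  its smallest eigenvalue is at least 1/2; the normal inequality then bounds the coefficients of
  any fit that does at least as well as the zero fit by the empirical correlations with the data.\<close>
lemma least_squares_coefficient_bound:
  fixes c :: "'a \<Rightarrow> real" and Z :: "'b \<Rightarrow> real" and F :: "'a \<Rightarrow> 'b \<Rightarrow> real"
  assumes K: "finite K" and I: "finite I" "I \<noteq> {}"
    and fit: "(\<Sum>i\<in>I. (Z i - (\<Sum>k\<in>K. c k * F k i))^2) \<le> (\<Sum>i\<in>I. (Z i)^2)"
    and gram: "(\<Sum>j\<in>K. \<Sum>k\<in>K. ((\<Sum>i\<in>I. F j i * F k i - of_bool (j = k)) / card I)^2) \<le> 1/4"
  shows "(\<Sum>k\<in>K. (c k)^2) \<le> 16 * (\<Sum>k\<in>K. ((\<Sum>i\<in>I. Z i * F k i) / card I)^2)"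
proof -
  define n where "n = real (card I)"
  define M where "M j k = (\<Sum>i\<in>I. F j i * F k i - of_bool (j = k)) / n" for j k
  define W where "W k = (\<Sum>i\<in>I. Z i * F k i) / n" for k
  define A where "A = (\<Sum>k\<in>K. (c k)^2)"
  define Q where "Q = (\<Sum>j\<in>K. \<Sum>k\<in>K. c j * c k * M j k)"
  define R where "R = (\<Sum>k\<in>K. c k * W k)"
  define S where "S = (\<Sum>k\<in>K. (W k)^2)"
  have n: "n > 0" using I unfolding n_def by (simp add: card_gt_0_iff)
  have A: "A \<ge> 0" unfolding A_def by (simp add: sum_nonneg)
  have "(\<Sum>i\<in>I. (\<Sum>k\<in>K. c k * F k i)^2) = n * (Q + A)"
  proof -
    have "(\<Sum>i\<in>I. F j i * F k i) = n * M j k + n * of_bool (j = k)" for j k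
      using n unfolding M_def n_def by (simp add: sum_subtractf)
    then show ?thesis
      unfolding sum_square_linear_combination Q_def A_def
      by (simp add: algebra_simps sum.distrib sum_distrib_left power2_eq_square of_bool_def
          if_distrib[of "\<lambda>a. _ * a"] sum.delta' K cong: if_cong)
  qed
  moreover have "(\<Sum>i\<in>I. Z i * (\<Sum>k\<in>K. c k * F k i)) = n * R"
    using n unfolding R_def W_def
    by (simp add: sum_distrib_left sum_divide_distrib sum.swap[of _ I] mult_ac)
  moreover have "(\<Sum>i\<in>I. (Z i - (\<Sum>k\<in>K. c k * F k i))^2)
      = (\<Sum>i\<in>I. (Z i)^2) - 2 * (\<Sum>i\<in>I. Z i * (\<Sum>k\<in>K. c k * F k i)) + (\<Sum>i\<in>I. (\<Sum>k\<in>K. c k * F k i)^2)"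
    by (simp add: power2_diff sum.distrib sum_subtractf sum_distrib_left mult.assoc)
  ultimately have "n * (Q + A) \<le> n * (2 * R)" using fit by simp
  then have normal: "Q + A \<le> 2 * R" using n by simp
  have "Q^2 \<le> A^2 * (\<Sum>j\<in>K. \<Sum>k\<in>K. (M j k)^2)"
    unfolding Q_def A_def by (rule Cauchy_Schwarz_bilinear_form)
  also have "\<dots> \<le> A^2 * (1/4)"
    using gram unfolding M_def n_def by (intro mult_left_mono) auto
  finally have "\<bar>Q\<bar>^2 \<le> (A / 2)^2" by (simp add: power_divide)
  then have "\<bar>Q\<bar> \<le> A / 2" by (rule power2_le_imp_le) (use A in simp)
  with normal have RA: "A / 4 \<le> R" by linarith
  have R2: "R^2 \<le> A * S" unfolding R_def A_def S_def by (rule Cauchy_Schwarz_ineq_sum)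
  have "A \<le> 16 * S"
  proof (cases "A = 0")
    case True then show ?thesis unfolding S_def by (simp add: sum_nonneg)
  next
    case False
    then have "A > 0" using A by simp
    with RA have "(A / 4)^2 \<le> R^2" by (intro power_mono) auto
    with R2 have "A * A \<le> A * (16 * S)" by (simp add: power2_eq_square)
    with \<open>A > 0\<close> show ?thesis by simp
  qed
  then show ?thesis unfolding A_def S_def W_def n_def .
qed

locale fourier_regression = prob_space \<mu> for \<mu> :: "(real \<times> real) measure" +
  fixes s_star s_m :: "real \<Rightarrow> real" and D :: nat
  assumes sets_eq_borel: "sets \<mu> = sets borel"
    and distr_fst: "distr \<mu> lborel fst = PX"
    and square_integrable_snd: "integrable \<mu> (\<lambda>p. (snd p)^2)"
    and cond_exp_snd: "AE p in \<mu>. s_star (fst p) = real_cond_exp \<mu> (vimage_algebra (space \<mu>) fst borel) snd p"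
    and s_star_Linf: "s_star \<in> Linf_T"
    and s_m_model: "s_m \<in> model D"
    and s_m_projection: "\<forall>g \<in> model D. inner_PX (\<lambda>t. s_star t - s_m t) g = 0"
begin

definition noise :: "real \<times> real \<Rightarrow> real" where
  "noise p = snd p - s_m (fst p)"

lemma measurable_from_borel: "f \<in> borel_measurable borel \<Longrightarrow> f \<in> borel_measurable \<mu>"
  using measurable_cong_sets[OF sets_eq_borel refl] by blast

lemma fst_measurable [measurable]: "fst \<in> borel_measurable \<mu>"
  and snd_measurable [measurable]: "snd \<in> borel_measurable \<mu>"
  by (auto intro!: measurable_from_borel borel_measurable_continuous_onI continuous_intros)

lemma s_m_measurable [measurable]: "s_m \<in> borel_measurable borel"
  using model_continuous[OF s_m_model] by (rule borel_measurable_continuous_onI)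

lemma s_star_measurable [measurable]: "s_star \<in> borel_measurable borel"
  using s_star_Linf unfolding Linf_T_def by auto

lemma noise_measurable [measurable]: "noise \<in> borel_measurable \<mu>"
  unfolding noise_def by measurable

lemma integral_fst_eq_PX:
  fixes u :: "real \<Rightarrow> real"
  assumes "u \<in> borel_measurable borel"
  shows "(\<integral>p. u (fst p) \<partial>\<mu>) = integral\<^sup>L PX u"
  using integral_distr[of fst \<mu> lborel u] distr_fst assms by simp

lemma integrable_fst_bounded:
  fixes u :: "real \<Rightarrow> real"
  assumes "u \<in> borel_measurable borel" "\<And>t. \<bar>u t\<bar> \<le> B"
  shows "integrable \<mu> (\<lambda>p. u (fst p))"
  by (rule integrable_const_bound[where B=B]) (use assms in auto)

lemma square_integrable_noise: "integrable \<mu> (\<lambda>p. (noise p)^2)"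
proof -
  obtain B where B: "\<And>t. \<bar>s_m t\<bar> \<le> B" using model_bounded[OF s_m_model] by metis
  have bound: "(noise p)^2 \<le> 2 * (snd p)^2 + 2 * B^2" for p
  proof -
    have "(s_m (fst p))^2 \<le> B^2" using power_mono[OF B[of "fst p"] abs_ge_zero, of 2] by simp
    moreover have "(snd p - s_m (fst p))^2 \<le> 2 * (snd p)^2 + 2 * (s_m (fst p))^2"
      using zero_le_power2[of "snd p + s_m (fst p)"] by (simp add: power2_eq_square algebra_simps)
    ultimately show ?thesis unfolding noise_def by linarith
  qed
  show ?thesis
  proof (rule Bochner_Integration.integrable_bound[of _ "\<lambda>p. 2 * (snd p)^2 + 2 * B^2"])
    show "integrable \<mu> (\<lambda>p. 2 * (snd p)^2 + 2 * B^2)" using square_integrable_snd by auto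
    show "AE p in \<mu>. norm ((noise p)^2) \<le> norm (2 * (snd p)^2 + 2 * B^2)"
    proof (rule AE_I2)
      fix p
      have "norm ((noise p)^2) = (noise p)^2" "2 * (snd p)^2 + 2 * B^2 \<le> norm (2 * (snd p)^2 + 2 * B^2)"
        by simp_all
      then show "norm ((noise p)^2) \<le> norm (2 * (snd p)^2 + 2 * B^2)" using bound[of p] by linarith
    qed
  qed measurable
qed

lemma integrable_phi_mult_snd: "integrable \<mu> (\<lambda>p. phi k (fst p) * snd p)"
proof (rule Bochner_Integration.integrable_bound[of _ "\<lambda>p. sqrt 2 * snd p"])
  show "integrable \<mu> (\<lambda>p. sqrt 2 * snd p)"
    using square_integrable_imp_integrable[OF snd_measurable square_integrable_snd] by simp
  show "AE p in \<mu>. norm (phi k (fst p) * snd p) \<le> norm (sqrt 2 * snd p)"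
    by (intro AE_I2) (simp add: abs_mult mult_right_mono abs_phi_le)
qed measurable

lemma integral_phi_mult_snd:
  "(\<integral>p. phi k (fst p) * snd p \<partial>\<mu>) = (\<integral>p. phi k (fst p) * s_star (fst p) \<partial>\<mu>)"
proof -
  define F where "F = vimage_algebra (space \<mu>) fst (borel :: real measure)"
  interpret F: finite_measure_subalgebra \<mu> F
  proof
    show "subalgebra \<mu> F"
      unfolding subalgebra_def F_def sets_vimage_algebra2[of fst "space \<mu>" borel, simplified]
      using measurable_sets[OF fst_measurable] by auto
  qed
  have "(\<lambda>p. phi k (fst p)) \<in> borel_measurable F"
    using measurable_vimage_algebra1[of fst "space \<mu>" borel] unfolding F_def by measurable
  moreover note integrable_phi_mult_snd
  ultimately have "(\<integral>p. phi k (fst p) * snd p \<partial>\<mu>) = (\<integral>p. phi k (fst p) * real_cond_exp \<mu> F snd p \<partial>\<mu>)"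
    by (intro F.real_cond_exp_intg(2)[symmetric]) auto
  also have "\<dots> = (\<integral>p. phi k (fst p) * s_star (fst p) \<partial>\<mu>)"
    using cond_exp_snd unfolding F_def by (intro integral_cong_AE) auto
  finally show ?thesis .
qed

lemma integral_noise_mult_phi:
  assumes k: "k \<in> {1..D}"
  shows "(\<integral>p. noise p * phi k (fst p) \<partial>\<mu>) = 0"
proof -
  obtain Bm where Bm: "\<And>t. \<bar>s_m t\<bar> \<le> Bm" using model_bounded[OF s_m_model] by metis
  obtain Bs where Bs: "\<And>t. \<bar>s_star t\<bar> \<le> Bs"
    using s_star_Linf unfolding Linf_T_def bounded_iff by fastforce
  have int_bounded: "integrable \<mu> (\<lambda>p. s (fst p) * phi k (fst p))"
    if "s \<in> borel_measurable borel" "\<And>t. \<bar>s t\<bar> \<le> B" for s B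
  proof (rule integrable_fst_bounded[where B="B * sqrt 2"])
    show "\<bar>s t * phi k t\<bar> \<le> B * sqrt 2" for t
      unfolding abs_mult using that(2)[of t] abs_phi_le[of k t]
      by (intro mult_mono) (auto intro: order_trans[OF abs_ge_zero])
  qed (use that in measurable)
  have "(\<integral>p. noise p * phi k (fst p) \<partial>\<mu>)
      = (\<integral>p. phi k (fst p) * snd p - s_m (fst p) * phi k (fst p) \<partial>\<mu>)"
    unfolding noise_def by (simp add: algebra_simps)
  also have "\<dots> = (\<integral>p. phi k (fst p) * s_star (fst p) \<partial>\<mu>) - (\<integral>p. s_m (fst p) * phi k (fst p) \<partial>\<mu>)"
    using integrable_phi_mult_snd int_bounded[OF s_m_measurable Bm]
    by (simp add: integral_phi_mult_snd)
  also have "\<dots> = (\<integral>p. s_star (fst p) * phi k (fst p) - s_m (fst p) * phi k (fst p) \<partial>\<mu>)"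
    using int_bounded[OF s_star_measurable Bs] int_bounded[OF s_m_measurable Bm]
    by (simp add: mult.commute)
  also have "\<dots> = (\<integral>p. (s_star (fst p) - s_m (fst p)) * phi k (fst p) \<partial>\<mu>)"
    by (rule Bochner_Integration.integral_cong) (simp_all add: left_diff_distrib)
  also have "\<dots> = inner_PX (\<lambda>t. s_star t - s_m t) (phi k)"
    unfolding inner_PX_def by (rule integral_fst_eq_PX) measurable
  also have "\<dots> = 0" using s_m_projection phi_in_model[OF k] by blast
  finally show ?thesis .
qed

lemma noise_mult_phi_square:
  shows "integrable \<mu> (\<lambda>p. (noise p * phi k (fst p))^2)"
    and "(\<integral>p. (noise p * phi k (fst p))^2 \<partial>\<mu>) \<le> 2 * (\<integral>p. (noise p)^2 \<partial>\<mu>)"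
proof -
  have bound: "(noise p * phi k (fst p))^2 \<le> 2 * (noise p)^2" for p
  proof -
    have "(phi k (fst p))^2 \<le> 2" using power_mono[OF abs_phi_le[of k "fst p"] abs_ge_zero, of 2] by simp
    from mult_left_mono[OF this zero_le_power2[of "noise p"]]
    show ?thesis unfolding power_mult_distrib by (simp add: mult.commute)
  qed
  show int: "integrable \<mu> (\<lambda>p. (noise p * phi k (fst p))^2)"
  proof (rule Bochner_Integration.integrable_bound[of _ "\<lambda>p. 2 * (noise p)^2"])
    show "integrable \<mu> (\<lambda>p. 2 * (noise p)^2)" using square_integrable_noise by simp
    show "AE p in \<mu>. norm ((noise p * phi k (fst p))^2) \<le> norm (2 * (noise p)^2)"
      using bound by (intro AE_I2) simp
  qed measurable
  have "(\<integral>p. (noise p * phi k (fst p))^2 \<partial>\<mu>) \<le> (\<integral>p. 2 * (noise p)^2 \<partial>\<mu>)"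
    by (rule integral_mono[OF int]) (use square_integrable_noise bound in simp_all)
  then show "(\<integral>p. (noise p * phi k (fst p))^2 \<partial>\<mu>) \<le> 2 * (\<integral>p. (noise p)^2 \<partial>\<mu>)" by simp
qed

definition gram_entry :: "nat \<Rightarrow> nat \<Rightarrow> real \<times> real \<Rightarrow> real" where
  "gram_entry j k p = phi j (fst p) * phi k (fst p) - of_bool (j = k)"

lemma gram_entry_measurable [measurable]: "gram_entry j k \<in> borel_measurable \<mu>"
  unfolding gram_entry_def by measurable

lemma integral_gram_entry: "1 \<le> j \<Longrightarrow> 1 \<le> k \<Longrightarrow> integral\<^sup>L \<mu> (gram_entry j k) = 0"
proof -
  assume "1 \<le> j" "1 \<le> k"
  interpret PX: prob_space PX by (rule prob_space_PX)
  have "integral\<^sup>L \<mu> (gram_entry j k)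
      = (\<integral>t. phi j t * phi k t - of_bool (j = k) \<partial>PX)"
    unfolding gram_entry_def by (rule integral_fst_eq_PX) measurable
  also have "\<dots> = 0"
    using integrable_PX_phi_mult_phi[of j k] integral_PX_phi_mult_phi[OF \<open>1 \<le> j\<close> \<open>1 \<le> k\<close>]
    by (simp add: PX.prob_space)
  finally show ?thesis .
qed

lemma gram_entry_square:
  shows "integrable \<mu> (\<lambda>p. (gram_entry j k p)^2)"
    and "(\<integral>p. (gram_entry j k p)^2 \<partial>\<mu>) \<le> 9"
proof -
  have abs_le_3: "\<bar>phi j t * phi k t - of_bool (j = k)\<bar> \<le> 3" for t
  proof -
    have "\<bar>of_bool (j = k) :: real\<bar> \<le> 1" by simp
    then show ?thesis
      using abs_triangle_ineq4[of "phi j t * phi k t" "of_bool (j = k)"] abs_phi_mult_phi_le[of j t k]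
      by linarith
  qed
  have bound: "(phi j t * phi k t - of_bool (j = k))^2 \<le> 9" for t
    using power_mono[OF abs_le_3[of t] abs_ge_zero, of 2] by simp
  show int: "integrable \<mu> (\<lambda>p. (gram_entry j k p)^2)"
    unfolding gram_entry_def by (rule integrable_fst_bounded[where B=9]) (use bound in simp_all)
  have "(\<integral>p. (gram_entry j k p)^2 \<partial>\<mu>) \<le> (\<integral>p. 9 \<partial>\<mu>)"
    by (rule integral_mono[OF int]) (use bound in \<open>simp_all add: gram_entry_def\<close>)
  then show "(\<integral>p. (gram_entry j k p)^2 \<partial>\<mu>) \<le> 9"
    by (simp add: prob_space)
qed

definition gram_deviation :: "nat \<Rightarrow> (nat \<Rightarrow> real \<times> real) \<Rightarrow> real" where
  "gram_deviation n \<omega> =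
     (\<Sum>j=1..D. \<Sum>k=1..D. ((\<Sum>i=1..n. gram_entry j k (\<omega> i)) / n)^2)"

definition noise_correlation :: "nat \<Rightarrow> (nat \<Rightarrow> real \<times> real) \<Rightarrow> real" where
  "noise_correlation n \<omega> = (\<Sum>k=1..D. ((\<Sum>i=1..n. noise (\<omega> i) * phi k (fst (\<omega> i))) / n)^2)"

lemma estimation_error_le_noise_correlation:
  assumes n: "1 \<le> n" and s: "s \<in> model D" and lsq: "\<forall>s' \<in> model D. emp_risk n \<omega> s \<le> emp_risk n \<omega> s'"
    and gram: "gram_deviation n \<omega> \<le> 1/4"
  shows "norm2_sq (\<lambda>t. s t - s_m t) \<le> 16 * noise_correlation n \<omega>"
proof -
  obtain a b where a: "s = (\<lambda>x. \<Sum>k=1..D. a k * phi k x)" and b: "s_m = (\<lambda>x. \<Sum>k=1..D. b k * phi k x)"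
    using s s_m_model unfolding model_def by blast
  define c where "c k = a k - b k" for k
  have diff: "s t - s_m t = (\<Sum>k=1..D. c k * phi k t)" for t
    unfolding a b c_def by (simp add: sum_subtractf left_diff_distrib)
  have "(\<Sum>i=1..n. (snd (\<omega> i) - s (fst (\<omega> i)))^2) \<le> (\<Sum>i=1..n. (snd (\<omega> i) - s_m (fst (\<omega> i)))^2)"
    using lsq s_m_model n unfolding emp_risk_def by (auto simp: divide_le_cancel)
  then have "(\<Sum>i=1..n. (noise (\<omega> i) - (\<Sum>k=1..D. c k * phi k (fst (\<omega> i))))^2) \<le> (\<Sum>i=1..n. (noise (\<omega> i))^2)"
    unfolding noise_def diff[symmetric] by simp
  from least_squares_coefficient_bound[OF _ _ _ this]
  have "(\<Sum>k=1..D. (c k)^2) \<le> 16 * noise_correlation n \<omega>"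
    using gram n unfolding gram_deviation_def gram_entry_def noise_correlation_def by simp
  then show ?thesis unfolding diff norm2_sq_model .
qed

lemma integral_gram_deviation:
  assumes "1 \<le> n"
  shows "integrable (PiM {1..n} (\<lambda>_. \<mu>)) (gram_deviation n)"
    and "integral\<^sup>L (PiM {1..n} (\<lambda>_. \<mu>)) (gram_deviation n) \<le> 9 * real D ^ 2 / n"
proof -
  have mean: "integrable (PiM {1..n} (\<lambda>_. \<mu>))
        (\<lambda>\<omega>. ((\<Sum>i=1..n. gram_entry j k (\<omega> i)) / n)^2)"
    "(\<integral>\<omega>. ((\<Sum>i=1..n. gram_entry j k (\<omega> i)) / n)^2 \<partial>PiM {1..n} (\<lambda>_. \<mu>))
       \<le> 9 / n"
    if "j \<in> {1..D}" "k \<in> {1..D}" for j k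
    using integral_PiM_square_sample_mean[OF prob_space_axioms, of "{1..n}" "gram_entry j k"]
      integral_gram_entry[of j k] gram_entry_square[of j k] that assms
    by (auto intro!: divide_right_mono)
  have row: "integrable (PiM {1..n} (\<lambda>_. \<mu>)) (\<lambda>\<omega>. \<Sum>k=1..D. ((\<Sum>i=1..n. gram_entry j k (\<omega> i)) / n)^2)"
    if "j \<in> {1..D}" for j
    by (rule Bochner_Integration.integrable_sum) (erule mean(1)[OF that])
  show "integrable (PiM {1..n} (\<lambda>_. \<mu>)) (gram_deviation n)"
    unfolding gram_deviation_def by (rule Bochner_Integration.integrable_sum) (erule row)
  have "integral\<^sup>L (PiM {1..n} (\<lambda>_. \<mu>)) (gram_deviation n)
      = (\<Sum>j=1..D. \<Sum>k=1..D. \<integral>\<omega>. ((\<Sum>i=1..n. gram_entry j k (\<omega> i)) / n)^2 \<partial>PiM {1..n} (\<lambda>_. \<mu>))"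
    unfolding gram_deviation_def
    by (subst Bochner_Integration.integral_sum, erule row)
      (intro sum.cong refl Bochner_Integration.integral_sum mean(1); assumption)
  also have "\<dots> \<le> (\<Sum>j=1..D. \<Sum>k=1..D. 9 / n)"
    by (intro sum_mono mean(2)) auto
  also have "\<dots> = 9 * real D ^ 2 / n"
    by (simp add: power2_eq_square)
  finally show "integral\<^sup>L (PiM {1..n} (\<lambda>_. \<mu>)) (gram_deviation n) \<le> 9 * real D ^ 2 / n" .
qed

lemma integral_noise_correlation:
  assumes "1 \<le> n"
  shows "integrable (PiM {1..n} (\<lambda>_. \<mu>)) (noise_correlation n)"
    and "integral\<^sup>L (PiM {1..n} (\<lambda>_. \<mu>)) (noise_correlation n) \<le> 2 * real D * (\<integral>p. (noise p)^2 \<partial>\<mu>) / n"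
proof -
  have mean: "integrable (PiM {1..n} (\<lambda>_. \<mu>)) (\<lambda>\<omega>. ((\<Sum>i=1..n. noise (\<omega> i) * phi k (fst (\<omega> i))) / n)^2)"
    "(\<integral>\<omega>. ((\<Sum>i=1..n. noise (\<omega> i) * phi k (fst (\<omega> i))) / n)^2 \<partial>PiM {1..n} (\<lambda>_. \<mu>))
       \<le> 2 * (\<integral>p. (noise p)^2 \<partial>\<mu>) / n"
    if "k \<in> {1..D}" for k
    using integral_PiM_square_sample_mean[OF prob_space_axioms, of "{1..n}" "\<lambda>p. noise p * phi k (fst p)"]
      integral_noise_mult_phi[OF that] noise_mult_phi_square[of k] assms
    by (auto intro!: divide_right_mono)
  show "integrable (PiM {1..n} (\<lambda>_. \<mu>)) (noise_correlation n)"
    unfolding noise_correlation_def by (rule Bochner_Integration.integrable_sum) (erule mean(1))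
  have "integral\<^sup>L (PiM {1..n} (\<lambda>_. \<mu>)) (noise_correlation n)
      = (\<Sum>k=1..D. \<integral>\<omega>. ((\<Sum>i=1..n. noise (\<omega> i) * phi k (fst (\<omega> i))) / n)^2 \<partial>PiM {1..n} (\<lambda>_. \<mu>))"
    unfolding noise_correlation_def using mean(1) by (rule Bochner_Integration.integral_sum)
  also have "\<dots> \<le> (\<Sum>k=1..D. 2 * (\<integral>p. (noise p)^2 \<partial>\<mu>) / n)"
    by (intro sum_mono mean(2)) auto
  also have "\<dots> = 2 * real D * (\<integral>p. (noise p)^2 \<partial>\<mu>) / n"
    by simp
  finally show "integral\<^sup>L (PiM {1..n} (\<lambda>_. \<mu>)) (noise_correlation n) \<le> 2 * real D * (\<integral>p. (noise p)^2 \<partial>\<mu>) / n" .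
qed

lemma least_squares_error_bound:
  fixes s_hat :: "(nat \<Rightarrow> real \<times> real) \<Rightarrow> real \<Rightarrow> real"
  assumes noise_var: "(\<integral>p. (noise p)^2 \<partial>\<mu>) \<le> \<sigma>^2" and \<sigma>: "0 < \<sigma>"
    and s_hat: "\<forall>\<omega> \<in> space (PiM {1..n} (\<lambda>_. \<mu>)). s_hat \<omega> \<in> model D \<and>
                  (\<forall>s \<in> model D. emp_risk n \<omega> (s_hat \<omega>) \<le> emp_risk n \<omega> s)"
    and D: "1 \<le> D" and n: "1 \<le> n" and x: "0 < x" and n_large: "36 * real D ^ 2 * x \<le> real n"
  shows "\<exists>E \<in> sets (PiM {1..n} (\<lambda>_. \<mu>)). 1 - 2 / x \<le> measure (PiM {1..n} (\<lambda>_. \<mu>)) E \<and>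
           (\<forall>\<omega> \<in> E. norm2_sq (\<lambda>t. s_hat \<omega> t - s_m t) \<le> 32 * \<sigma>^2 * real D * x / n)"
proof -
  define P where "P = PiM {1..n} (\<lambda>_. \<mu>)"
  interpret P: prob_space P unfolding P_def by (intro prob_space_PiM prob_space_axioms)
  define t where "t = 2 * real D * \<sigma>^2 * x / n"
  have t: "t > 0" unfolding t_def using D n x \<sigma> by simp
  note gram = integral_gram_deviation[OF n, folded P_def]
  note corr = integral_noise_correlation[OF n, folded P_def]
  define A where "A = {\<omega> \<in> space P. 1/4 \<le> gram_deviation n \<omega>}"
  define B where "B = {\<omega> \<in> space P. t \<le> noise_correlation n \<omega>}"
  have A_sets: "A \<in> sets P" and B_sets: "B \<in> sets P"
    unfolding A_def B_def using gram(1) corr(1) by (auto dest: borel_measurable_integrable)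
  have "measure P A \<le> integral\<^sup>L P (gram_deviation n) / (1/4)"
    unfolding A_def by (rule integral_Markov_inequality_measure[OF gram(1) A_sets])
      (auto simp: gram_deviation_def intro!: sum_nonneg)
  also have "\<dots> \<le> 36 * real D ^ 2 / n" using gram(2) by simp
  also have "\<dots> \<le> 1 / x" using n_large x n by (simp add: field_simps)
  finally have A_small: "measure P A \<le> 1 / x" .
  have "measure P B \<le> integral\<^sup>L P (noise_correlation n) / t"
    unfolding B_def by (rule integral_Markov_inequality_measure[OF corr(1) B_sets])
      (auto simp: noise_correlation_def t intro!: sum_nonneg)
  also have "\<dots> \<le> (2 * real D * \<sigma>^2 / n) / t"
  proof -
    have "2 * real D * (\<integral>p. (noise p)^2 \<partial>\<mu>) / n \<le> 2 * real D * \<sigma>^2 / n"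
      using noise_var by (intro divide_right_mono mult_left_mono) auto
    then show ?thesis using corr(2) t by (intro divide_right_mono) auto
  qed
  also have "\<dots> = 1 / x" unfolding t_def using D n \<sigma> x by (simp add: field_simps)
  finally have B_small: "measure P B \<le> 1 / x" .
  define E where "E = space P - (A \<union> B)"
  have "E \<in> sets P" unfolding E_def using A_sets B_sets by auto
  moreover have "1 - 2 / x \<le> measure P E"
    using P.prob_compl[OF sets.Un[OF A_sets B_sets]] measure_Un_le[OF A_sets B_sets] A_small B_small
    unfolding E_def by simp
  moreover have "norm2_sq (\<lambda>t. s_hat \<omega> t - s_m t) \<le> 32 * \<sigma>^2 * real D * x / n" if "\<omega> \<in> E" for \<omega>
  proof -
    have "\<omega> \<in> space P" "gram_deviation n \<omega> < 1/4" "noise_correlation n \<omega> < t"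
      using that unfolding E_def A_def B_def by auto
    then have "norm2_sq (\<lambda>t. s_hat \<omega> t - s_m t) \<le> 16 * t"
      using estimation_error_le_noise_correlation[OF n, of "s_hat \<omega>"] s_hat unfolding P_def by fastforce
    also have "16 * t = 32 * \<sigma>^2 * real D * x / n" unfolding t_def by (simp add: field_simps)
    finally show ?thesis .
  qed
  ultimately show ?thesis unfolding P_def by blast
qed

end

lemma square_mult_le_of_less_divide_powr:
  fixes d e x y :: real
  assumes d: "1 \<le> d" and e: "2 \<le> e" and x: "0 < x" and less: "x < y / d powr e"
  shows "d^2 * x \<le> y"
proof -
  have "d^2 = d powr 2" using d by (simp add: powr_numeral)
  also have "\<dots> \<le> d powr e" using d e by (intro powr_mono) auto
  finally have "d^2 * x \<le> d powr e * x" using x by (intro mult_right_mono) auto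
  also have "\<dots> < y" using less d by (simp add: field_simps)
  finally show ?thesis by simp
qed

theorem theorem3:
  shows "\<forall>\<nu>::real. \<nu> > 1/2 \<longrightarrow>
   (\<exists>L_nu::real. L_nu > 0 \<and>
   (\<forall>L1 L2::real. L1 > 0 \<and> L2 > 0 \<longrightarrow>
   (\<exists>C::real. \<exists>\<beta>0::real. \<exists>n0::nat. C > 0 \<and> \<beta>0 > 0 \<and>
   (\<forall>\<sigma>::real. \<sigma> > 0 \<longrightarrow>
   (\<exists>LL::real. LL > 0 \<and>
   (\<forall>(\<mu>::(real \<times> real) measure) (s_star::real \<Rightarrow> real) (s_m::real \<Rightarrow> real)
      (s_hat::(nat \<Rightarrow> real \<times> real) \<Rightarrow> real \<Rightarrow> real) (D::nat) (n::nat) (x::real).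
      prob_space \<mu> \<and> sets \<mu> = sets borel \<and>
      distr \<mu> lborel fst = uniform_measure lborel {0..2*pi} \<and>
      integrable \<mu> (\<lambda>p. (snd p)^2) \<and>
      (AE p in \<mu>. s_star (fst p) = real_cond_exp \<mu> (vimage_algebra (space \<mu>) fst borel) snd p) \<and>
      s_star \<in> Lambda \<nu> L1 L2 \<and>
      s_m \<in> model D \<and> (\<forall>g \<in> model D. inner_PX (\<lambda>t. s_star t - s_m t) g = 0) \<and>
      prob_space.indep_var \<mu> borel fst borel (\<lambda>p. snd p - s_m (fst p)) \<and>
      (\<integral>p. (snd p - s_m (fst p))^2 \<partial>\<mu>) \<le> \<sigma>^2 \<and>
      (\<forall>\<omega> \<in> space (PiM {1..n} (\<lambda>_. \<mu>)). s_hat \<omega> \<in> model D \<and>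
          (\<forall>s \<in> model D. emp_risk n \<omega> (s_hat \<omega>) \<le> emp_risk n \<omega> s)) \<and>
      0 < (2 * sqrt 2 * L1 / L2) powr (1/\<nu>) \<and>
      (2 * sqrt 2 * L1 / L2) powr (1/\<nu>) \<le> real D \<and>
      real D \<le> L_nu * (real n / ln (real n)) powr (1 / (2 * (\<nu> + 1))) \<and>
      0 < x \<and> x < LL * real n / real D powr (2 * (\<nu> + 1)) \<and>
      n \<ge> n0
      \<longrightarrow>
      (\<exists>E \<in> sets (PiM {1..n} (\<lambda>_. \<mu>)).
         measure (PiM {1..n} (\<lambda>_. \<mu>)) E
           \<ge> 1 - exp (- (\<beta>0^2 * real n / 4)) - 1 / (real n)^2 - 2 / x \<and>
         (\<forall>\<omega> \<in> E. norm2_sq (\<lambda>t. s_hat \<omega> t - s_m t)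
                     \<le> C * \<sigma>^2 * real D * x / real n))))))))"
  \<comment> \<open>witnesses: \<open>L_nu = 1\<close>, \<open>C = 32\<close>, \<open>\<beta>0 = 1\<close>, \<open>n0 = 1\<close>, \<open>LL = 1/36\<close>\<close>
  apply (intro allI impI)
  apply (rule exI[of _ 1], intro conjI allI impI, simp)
  apply (rule exI[of _ 32], rule exI[of _ 1], rule exI[of _ 1], intro conjI allI impI, simp, simp)
  apply (rule exI[of _ "1/36"], intro conjI allI impI, simp)
  apply (elim conjE)
  subgoal premises H for \<nu> L1 L2 \<sigma> \<mu> s_star s_m s_hat D n x
  proof -
    have "s_star \<in> Linf_T" using H unfolding Lambda_def by blast
    interpret fourier_regression \<mu> s_star s_m D
      by (intro fourier_regression.intro fourier_regression_axioms.intro)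
        (use H \<open>s_star \<in> Linf_T\<close> in \<open>simp_all add: PX_def\<close>)
    have "0 < real D" using H by linarith
    then have D: "1 \<le> D" by simp
    have "real D ^ 2 * x \<le> 1/36 * real n"
    proof (rule square_mult_le_of_less_divide_powr)
      show "x < 1/36 * real n / real D powr (2 * (\<nu> + 1))" by (fact H)
    qed (use H D in auto)
    then obtain E where E: "E \<in> sets (PiM {1..n} (\<lambda>_. \<mu>))"
      "1 - 2 / x \<le> measure (PiM {1..n} (\<lambda>_. \<mu>)) E"
      "\<forall>\<omega> \<in> E. norm2_sq (\<lambda>t. s_hat \<omega> t - s_m t) \<le> 32 * \<sigma>^2 * real D * x / n"
      using least_squares_error_bound[where s_hat = s_hat and \<sigma> = \<sigma> and n = n and x = x] H D
      unfolding noise_def by auto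
    have "0 < exp (- (1^2 * real n / 4))" "0 \<le> 1 / (real n)^2" by simp_all
    then have "1 - exp (- (1^2 * real n / 4)) - 1 / (real n)^2 - 2 / x \<le> 1 - 2 / x" by linarith
    then show ?thesis using E by (intro bexI[of _ E] conjI) auto
  qed
  done

end
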